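(* Let $K\subseteq H$ be compact and $\rho>0$. Then there exists $\rho'>0$ such that $\|\Psi_\hbar(a)\|_{D_n,\rho}\le\|a\|_{\mathbb{C}^{1+n},\rho'}$ for all $\hbar\in K$ and all $a\in\mathcal{P}(\mathbb{C}^{1+n})^{U(1)}$. Conversely, there exists $\rho''>0$ such that $\|\Phi_\hbar(b)\|_{\mathbb{C}^{1+n},\rho}\le\|b\|_{D_n,\rho''}$ for all $\hbar\in K$ and all $b\in\mathcal{P}(D_n)$.
   Context: Fix $n\ge1$; $|P|=\sum P_i$; for $P\in\mathbb{N}_0^{1+n}$, $P'=(P_1,\dots,P_n)$. $\mathcal{P}(\mathbb{C}^{1+n})$ is the space of polynomials in $z^\mu,\bar z^\mu$ ($\mu=0,\dots,n$) with basis $d_{P,Q}=z^P\bar z^Q$, $P,Q\in\mathbb{N}_0^{1+n}$; $\mathcal{P}(\mathbb{C}^{1+n})^{U(1)}$ is the span of the $d_{P,Q}$ with $|P|=|Q|$. For $\rho>0$, $\|\sum a_{P,Q}d_{P,Q}\|_{\mathbb{C}^{1+n},\rho}=\sum|a_{P,Q}|\rho^{|P+Q|}\sqrt{|P+Q|!}$. $D_n=Z/U(1)$, $Z=\{r:-|r^0|^2+\sum_{i\ge1}|r^i|^2=-1\}$, identified with the open unit ball via $w^i=r^i/r^0$. For $P,Q\in\mathbb{N}_0^{1+n}$, $|P|=|Q|$: $f_{P,Q}([r])=r^P\bar r^Q=w^{P'}\bar w^{Q'}/(1-w\cdot\bar w)^{|P|}$; $\mathcal{P}(D_n)$ their span.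 For $P,Q\in\mathbb{N}_0^n$: $f_{r,P,Q}=w^P\bar w^Q/(1-w\cdot\bar w)^{\max\{|P|,|Q|\}}$, a basis of $\mathcal{P}(D_n)$; $\|\sum b_{P,Q}f_{r,P,Q}\|_{D_n,\rho}=\sum|b_{P,Q}|\rho^{|P+Q|}$. $H=\mathbb{C}\setminus(\{0\}\cup\{-1/(2m):m\in\mathbb{N}\})$; $(z)_m=\prod_{k=0}^{m-1}(z+k)$. For $\hbar\in H$: $\Psi_\hbar:\mathcal{P}(\mathbb{C}^{1+n})^{U(1)}\to\mathcal{P}(D_n)$ is linear with $\Psi_\hbar(d_{P,Q})=(2\hbar)^{|P|}(\frac1{2\hbar})_{|P|}f_{P,Q}$; $\Phi_\hbar:\mathcal{P}(D_n)\to\mathcal{P}(\mathbb{C}^{1+n})$ is linear with $\Phi_\hbar(f_{r,P,Q})=\big((2\hbar)^{\max\{|P|,|Q|\}}(\frac1{2\hbar})_{\max\{|P|,|Q|\}}\big)^{-1}d_{\tilde P,\tilde Q}$ for $P,Q\in\mathbb{N}_0^n$, where $\tilde P=(\max\{|Q|-|P|,0\},P_1,\dots,P_n)$ and $\tilde Q=(\max\{|P|-|Q|,0\},Q_1,\dots,Q_n)$; it satisfies $\Psi_\hbar\circ\Phi_\hbar=\mathrm{id}$. *)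

theory Defs
  imports "HOL-Analysis.Analysis"
begin

text \<open>Multi-indices in N_0^{1+n} are functions nat => nat vanishing outside {0..n};
  multi-indices in N_0^n (for D_n) are functions vanishing outside {1..n}, so that
  P' (drop the 0th entry) is P(0 := 0).\<close>

definition mi :: "nat \<Rightarrow> (nat \<Rightarrow> nat) set" where
  "mi n = {P. \<forall>i>n. P i = 0}"

definition mi' :: "nat \<Rightarrow> (nat \<Rightarrow> nat) set" where
  "mi' n = {P. \<forall>i. (i = 0 \<or> i > n) \<longrightarrow> P i = 0}"

definition absmi :: "nat \<Rightarrow> (nat \<Rightarrow> nat) \<Rightarrow> nat" where
  "absmi n P = (\<Sum>i\<le>n. P i)"

definition prime_mi :: "(nat \<Rightarrow> nat) \<Rightarrow> (nat \<Rightarrow> nat)" where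
  "prime_mi P = P(0 := 0)"

definition supp :: "('a \<Rightarrow> complex) \<Rightarrow> 'a set" where
  "supp a = {x. a x \<noteq> 0}"

text \<open>An element of P(C^{1+n}) is given by its coefficients a(P,Q) w.r.t. the basis d_{P,Q}.\<close>

definition is_Cpoly :: "nat \<Rightarrow> ((nat \<Rightarrow> nat) \<times> (nat \<Rightarrow> nat) \<Rightarrow> complex) \<Rightarrow> bool" where
  "is_Cpoly n a \<longleftrightarrow> finite (supp a) \<and> supp a \<subseteq> mi n \<times> mi n"

definition is_CpolyU1 :: "nat \<Rightarrow> ((nat \<Rightarrow> nat) \<times> (nat \<Rightarrow> nat) \<Rightarrow> complex) \<Rightarrow> bool" where
  "is_CpolyU1 n a \<longleftrightarrow> is_Cpoly n a \<and> (\<forall>(P,Q)\<in>supp a. absmi n P = absmi n Q)"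

definition Cnorm :: "nat \<Rightarrow> real \<Rightarrow> ((nat \<Rightarrow> nat) \<times> (nat \<Rightarrow> nat) \<Rightarrow> complex) \<Rightarrow> real" where
  "Cnorm n \<rho> a = (\<Sum>(P,Q)\<in>supp a.
      cmod (a (P,Q)) * \<rho> ^ (absmi n P + absmi n Q) * sqrt (fact (absmi n P + absmi n Q)))"

text \<open>D_n identified with the open unit ball in C^n, coordinates w_1..w_n
  (a point is a function nat => complex vanishing outside {1..n}).\<close>

definition ball_n :: "nat \<Rightarrow> (nat \<Rightarrow> complex) set" where
  "ball_n n = {w. (\<forall>i. (i = 0 \<or> i > n) \<longrightarrow> w i = 0) \<and> (\<Sum>i\<in>{1..n}. (cmod (w i))\<^sup>2) < 1}"

definition mon :: "nat \<Rightarrow> (nat \<Rightarrow> complex) \<Rightarrow> (nat \<Rightarrow> nat) \<Rightarrow> complex" where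
  "mon n w P = (\<Prod>i\<in>{1..n}. w i ^ P i)"

definition wsq :: "nat \<Rightarrow> (nat \<Rightarrow> complex) \<Rightarrow> complex" where
  "wsq n w = (\<Sum>i\<in>{1..n}. w i * cnj (w i))"

definition fPQ :: "nat \<Rightarrow> (nat \<Rightarrow> nat) \<Rightarrow> (nat \<Rightarrow> nat) \<Rightarrow> (nat \<Rightarrow> complex) \<Rightarrow> complex" where
  "fPQ n P Q w = mon n w (prime_mi P) * cnj (mon n w (prime_mi Q)) / (1 - wsq n w) ^ absmi n P"

definition frPQ :: "nat \<Rightarrow> (nat \<Rightarrow> nat) \<Rightarrow> (nat \<Rightarrow> nat) \<Rightarrow> (nat \<Rightarrow> complex) \<Rightarrow> complex" where
  "frPQ n P Q w = mon n w P * cnj (mon n w Q) / (1 - wsq n w) ^ max (absmi n P) (absmi n Q)"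

text \<open>An element of P(D_n) is given by its (unique) coefficients b(P,Q) w.r.t. the basis f_{r,P,Q}.\<close>
definition is_Dcoeffs :: "nat \<Rightarrow> ((nat \<Rightarrow> nat) \<times> (nat \<Rightarrow> nat) \<Rightarrow> complex) \<Rightarrow> bool" where
  "is_Dcoeffs n b \<longleftrightarrow> finite (supp b) \<and> supp b \<subseteq> mi' n \<times> mi' n"

definition Dfun :: "nat \<Rightarrow> ((nat \<Rightarrow> nat) \<times> (nat \<Rightarrow> nat) \<Rightarrow> complex) \<Rightarrow> (nat \<Rightarrow> complex) \<Rightarrow> complex" where
  "Dfun n b w = (\<Sum>(P,Q)\<in>supp b. b (P,Q) * frPQ n P Q w)"

definition Dnorm_coeffs :: "nat \<Rightarrow> real \<Rightarrow> ((nat \<Rightarrow> nat) \<times> (nat \<Rightarrow> nat) \<Rightarrow> complex) \<Rightarrow> real" where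
  "Dnorm_coeffs n \<rho> b = (\<Sum>(P,Q)\<in>supp b. cmod (b (P,Q)) * \<rho> ^ (absmi n P + absmi n Q))"

text \<open>Norm of a function in P(D_n): computed from its coefficients in the basis f_{r,P,Q}
  (unique, since the f_{r,P,Q} form a basis).\<close>
definition Dnorm :: "nat \<Rightarrow> real \<Rightarrow> ((nat \<Rightarrow> complex) \<Rightarrow> complex) \<Rightarrow> real" where
  "Dnorm n \<rho> F = Dnorm_coeffs n \<rho>
     (THE b. is_Dcoeffs n b \<and> (\<forall>w\<in>ball_n n. F w = Dfun n b w))"

definition Hset :: "complex set" where
  "Hset = - ({0} \<union> {- 1 / (2 * of_nat m) | m::nat. m \<ge> 1})"

definition Psi :: "nat \<Rightarrow> complex \<Rightarrow> ((nat \<Rightarrow> nat) \<times> (nat \<Rightarrow> nat) \<Rightarrow> complex)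
                    \<Rightarrow> (nat \<Rightarrow> complex) \<Rightarrow> complex" where
  "Psi n h a = (\<lambda>w. \<Sum>(P,Q)\<in>supp a.
      a (P,Q) * ((2*h) ^ absmi n P * pochhammer (1 / (2*h)) (absmi n P)) * fPQ n P Q w)"

definition tildeP :: "nat \<Rightarrow> (nat \<Rightarrow> nat) \<Rightarrow> (nat \<Rightarrow> nat) \<Rightarrow> (nat \<Rightarrow> nat)" where
  "tildeP n P Q = P(0 := absmi n Q - absmi n P)"

definition Phi :: "nat \<Rightarrow> complex \<Rightarrow> ((nat \<Rightarrow> nat) \<times> (nat \<Rightarrow> nat) \<Rightarrow> complex)
                    \<Rightarrow> ((nat \<Rightarrow> nat) \<times> (nat \<Rightarrow> nat) \<Rightarrow> complex)" where
  "Phi n h b = (\<lambda>(X,Y). \<Sum>(P,Q)\<in>supp b.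
      (if (X,Y) = (tildeP n P Q, tildeP n Q P)
       then b (P,Q) / ((2*h) ^ max (absmi n P) (absmi n Q)
                       * pochhammer (1 / (2*h)) (max (absmi n P) (absmi n Q)))
       else 0))"

end

theory Submission
  imports Defs
begin

text \<open>
  Every \<open>f\<^sub>P\<^sub>Q\<close> with \<open>P\<^sub>0, Q\<^sub>0 \<ge> 1\<close> is, by \<open>1 = (1 - |w|\<^sup>2) + \<Sum> |w\<^sub>i|\<^sup>2\<close>, the sum of
  \<open>n + 1\<close> functions of the same kind in which \<open>min P\<^sub>0 Q\<^sub>0\<close> has dropped by one; iterating
  writes \<open>f\<^sub>P\<^sub>Q\<close> in the basis \<open>f\<^sub>r\<^sub>,\<^sub>P\<^sub>Q\<close> with coefficient mass at most \<open>(n + 1)\<^bsup>|P|\<^esup>\<close>.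
  The factor \<open>(2\<hbar>)\<^sup>N (1/(2\<hbar>))\<^sub>N = \<Prod>\<^sub>j\<^sub><\<^sub>N (1 + 2\<hbar>j)\<close> is at most \<open>(1 + 2M)\<^sup>N N!\<close> for
  \<open>|\<hbar>| \<le> M\<close>, and \<open>N! \<le> \<surd>(2N)!\<close>, which gives the estimate for \<open>\<Psi>\<close>. Conversely \<open>\<Phi>\<close> sends
  distinct basis vectors to distinct basis vectors, and since \<open>K\<close> keeps a positive distance
  from the poles \<open>-1/(2m)\<close> the factor is at least \<open>e\<^sup>N N! \<ge> e\<^sup>N \<surd>(2N)! / 2\<^sup>N\<close>.
  The norm on \<open>\<P>(D\<^sub>n)\<close> is well defined because the \<open>f\<^sub>r\<^sub>,\<^sub>P\<^sub>Q\<close> are linearly independent: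
  along the curve \<open>w\<^sub>i = (t u)\<^bsup>B\<^sup>i\<^esup>\<close>, the part of lowest order in \<open>t\<close> of a vanishing
  combination is a vanishing polynomial in \<open>u\<close> on the unit circle, whose exponents determine
  \<open>(P, Q)\<close> by uniqueness of base-\<open>B\<close> expansions.
\<close>

lemma absmi_split: "absmi n P = P 0 + (\<Sum>i\<in>{1..n}. P i)"
proof -
  have "{..n} = insert 0 {1..n}" by auto
  then show ?thesis unfolding absmi_def by simp
qed

lemma absmi_upd0: "absmi n (P(0 := v)) = v + (\<Sum>i\<in>{1..n}. P i)"
  by (simp add: absmi_split)

lemma absmi_prime_mi: "absmi n (prime_mi P) = absmi n P - P 0"
  by (simp add: prime_mi_def absmi_upd0 absmi_split)

lemma prime_mi_in_mi': "P \<in> mi n \<Longrightarrow> prime_mi P \<in> mi' n"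
  by (auto simp: mi_def mi'_def prime_mi_def)

lemma mi'_eqI: "P \<in> mi' n \<Longrightarrow> Q \<in> mi' n \<Longrightarrow> (\<forall>i\<in>{1..n}. P i = Q i) \<Longrightarrow> P = Q"
proof
  fix i
  assume "P \<in> mi' n" "Q \<in> mi' n" "\<forall>i\<in>{1..n}. P i = Q i"
  then show "P i = Q i" unfolding mi'_def by (cases "i = 0 \<or> i > n") auto
qed

lemma absmi_incr:
  assumes "i \<in> {1..n}"
  shows "absmi n (P(i := Suc (P i))) = absmi n P + 1"
proof -
  have "(\<Sum>j\<in>{1..n}. (P(i := Suc (P i))) j) = (\<Sum>j\<in>{1..n}. P j + (if j = i then 1 else 0))"
    by (rule sum.cong) auto
  then show ?thesis using assms by (simp add: absmi_split sum.distrib)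
qed

lemma mon_incr:
  assumes "i \<in> {1..n}"
  shows "mon n w (P(i := Suc (P i))) = mon n w P * w i"
proof -
  have "mon n w (P(i := Suc (P i))) = (\<Prod>j\<in>{1..n}. w j ^ P j * (if j = i then w i else 1))"
    unfolding mon_def by (rule prod.cong) auto
  then show ?thesis using assms by (simp add: mon_def prod.distrib)
qed

lemma absmi_tildeP: "P \<in> mi' n \<Longrightarrow> absmi n (tildeP n P Q) = max (absmi n P) (absmi n Q)"
  unfolding tildeP_def by (simp add: absmi_upd0 absmi_split mi'_def)

lemma prime_mi_tildeP: "P \<in> mi' n \<Longrightarrow> prime_mi (tildeP n P Q) = P"
  by (auto simp: tildeP_def prime_mi_def mi'_def)

lemma wsq_eq_of_real: "wsq n w = of_real (\<Sum>i\<in>{1..n}. (cmod (w i))\<^sup>2)"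
  unfolding wsq_def of_real_sum complex_norm_square by simp

lemma wsq_ne_1: "w \<in> ball_n n \<Longrightarrow> 1 - wsq n w \<noteq> 0"
  unfolding ball_n_def wsq_eq_of_real by (metis (mono_tags, lifting) mem_Collect_eq
    eq_iff_diff_eq_0 of_real_eq_1_iff order_less_irrefl)

type_synonym coeffs = "(nat \<Rightarrow> nat) \<times> (nat \<Rightarrow> nat) \<Rightarrow> complex"

text \<open>\<open>Dnorm\<close> selects the coordinates of a function in the basis \<open>f\<^sub>r\<^sub>,\<^sub>P\<^sub>Q\<close> with \<open>THE\<close>,
  so evaluating it needs their uniqueness.\<close>

definition represents :: "nat \<Rightarrow> coeffs \<Rightarrow> ((nat \<Rightarrow> complex) \<Rightarrow> complex) \<Rightarrow> bool" where
  "represents n b F \<longleftrightarrow> is_Dcoeffs n b \<and> (\<forall>w\<in>ball_n n. F w = Dfun n b w)"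

lemma represents_cong:
  "represents n b F \<Longrightarrow> (\<And>w. w \<in> ball_n n \<Longrightarrow> G w = F w) \<Longrightarrow> represents n b G"
  by (simp add: represents_def)

lemma Dfun_superset:
  assumes "finite S" "supp b \<subseteq> S"
  shows "Dfun n b w = (\<Sum>(P,Q)\<in>S. b (P,Q) * frPQ n P Q w)"
  unfolding Dfun_def by (rule sum.mono_neutral_left[OF assms]) (auto simp: supp_def)

lemma Dnorm_coeffs_superset:
  assumes "finite S" "supp b \<subseteq> S"
  shows "Dnorm_coeffs n \<rho> b = (\<Sum>(P,Q)\<in>S. cmod (b (P,Q)) * \<rho> ^ (absmi n P + absmi n Q))"
  unfolding Dnorm_coeffs_def by (rule sum.mono_neutral_left[OF assms]) (auto simp: supp_def)

lemma Cnorm_superset: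
  assumes "finite S" "supp a \<subseteq> S"
  shows "Cnorm n \<rho> a = (\<Sum>(P,Q)\<in>S.
    cmod (a (P,Q)) * \<rho> ^ (absmi n P + absmi n Q) * sqrt (fact (absmi n P + absmi n Q)))"
  unfolding Cnorm_def by (rule sum.mono_neutral_left[OF assms]) (auto simp: supp_def)

lemma supp_add: "supp (\<lambda>x. b1 x + b2 x) \<subseteq> supp b1 \<union> supp b2"
  by (auto simp: supp_def)

lemma Dnorm_coeffs_add_le:
  assumes "finite (supp b1)" "finite (supp b2)" "\<rho> \<ge> 0"
  shows "Dnorm_coeffs n \<rho> (\<lambda>x. b1 x + b2 x) \<le> Dnorm_coeffs n \<rho> b1 + Dnorm_coeffs n \<rho> b2"
proof -
  let ?S = "supp b1 \<union> supp b2"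
  have S: "finite ?S" using assms by simp
  have "Dnorm_coeffs n \<rho> (\<lambda>x. b1 x + b2 x)
      = (\<Sum>(P,Q)\<in>?S. cmod (b1 (P,Q) + b2 (P,Q)) * \<rho> ^ (absmi n P + absmi n Q))"
    using Dnorm_coeffs_superset[OF S supp_add] by simp
  also have "\<dots> \<le> (\<Sum>(P,Q)\<in>?S. cmod (b1 (P,Q)) * \<rho> ^ (absmi n P + absmi n Q)
                              + cmod (b2 (P,Q)) * \<rho> ^ (absmi n P + absmi n Q))"
    by (rule sum_mono) (auto simp: ring_distribs[symmetric] assms(3) intro!: mult_right_mono norm_triangle_ineq)
  also have "\<dots> = Dnorm_coeffs n \<rho> b1 + Dnorm_coeffs n \<rho> b2"
    using Dnorm_coeffs_superset[OF S, of b1] Dnorm_coeffs_superset[OF S, of b2]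
    by (simp add: sum.distrib case_prod_beta)
  finally show ?thesis .
qed

lemma Dnorm_coeffs_scale: "Dnorm_coeffs n \<rho> (\<lambda>x. c * b x) = cmod c * Dnorm_coeffs n \<rho> b"
proof (cases "c = 0")
  case False
  then have "supp (\<lambda>x. c * b x) = supp b" by (simp add: supp_def)
  then show ?thesis by (simp add: Dnorm_coeffs_def sum_distrib_left case_prod_beta norm_mult mult.assoc)
qed (simp add: Dnorm_coeffs_def supp_def)

lemma represents_add:
  assumes "represents n b1 F1" "represents n b2 F2"
  shows "represents n (\<lambda>x. b1 x + b2 x) (\<lambda>w. F1 w + F2 w)"
proof -
  let ?S = "supp b1 \<union> supp b2"
  have S: "finite ?S" "?S \<subseteq> mi' n \<times> mi' n"
    using assms by (auto simp: represents_def is_Dcoeffs_def)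
  have "F1 w + F2 w = Dfun n (\<lambda>x. b1 x + b2 x) w" if "w \<in> ball_n n" for w
    using that assms Dfun_superset[OF S(1), of b1] Dfun_superset[OF S(1), of b2]
      Dfun_superset[OF S(1) supp_add]
    by (simp add: represents_def sum.distrib[symmetric] case_prod_beta algebra_simps)
  then show ?thesis
    using S supp_add[of b1 b2] by (auto simp: represents_def is_Dcoeffs_def intro: finite_subset)
qed

lemma represents_scale:
  assumes "represents n b F"
  shows "represents n (\<lambda>x. c * b x) (\<lambda>w. c * F w)"
proof -
  have S: "finite (supp b)" "supp (\<lambda>x. c * b x) \<subseteq> supp b"
    using assms by (auto simp: represents_def is_Dcoeffs_def supp_def)
  show ?thesis
    using assms S Dfun_superset[OF S] unfolding represents_def is_Dcoeffs_def Dfun_def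
    by (auto simp: sum_distrib_left case_prod_beta algebra_simps intro: finite_subset)
qed

lemma represents_sum:
  assumes "finite A" "\<And>x. x \<in> A \<Longrightarrow> represents n (bs x) (Fs x)"
  shows "represents n (\<lambda>y. \<Sum>x\<in>A. bs x y) (\<lambda>w. \<Sum>x\<in>A. Fs x w)"
  using assms
proof (induction A rule: finite_induct)
  case empty
  then show ?case by (simp add: represents_def is_Dcoeffs_def supp_def Dfun_def)
next
  case (insert a A)
  then show ?case using represents_add[of n "bs a" "Fs a"] by simp
qed

lemma finite_supp_sum:
  assumes "finite A" "\<And>x. x \<in> A \<Longrightarrow> finite (supp (bs x))"
  shows "finite (supp (\<lambda>y. \<Sum>x\<in>A. bs x y))"
proof (rule finite_subset)
  show "supp (\<lambda>y. \<Sum>x\<in>A. bs x y) \<subseteq> (\<Union>x\<in>A. supp (bs x))"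
    by (auto simp: supp_def intro: ccontr)
qed (use assms in auto)

lemma Dnorm_coeffs_sum_le:
  assumes "finite A" "\<And>x. x \<in> A \<Longrightarrow> finite (supp (bs x))" "\<rho> \<ge> 0"
  shows "Dnorm_coeffs n \<rho> (\<lambda>y. \<Sum>x\<in>A. bs x y) \<le> (\<Sum>x\<in>A. Dnorm_coeffs n \<rho> (bs x))"
  using assms(1,2)
proof (induction A rule: finite_induct)
  case empty
  then show ?case by (simp add: Dnorm_coeffs_def supp_def)
next
  case (insert a A)
  then show ?case
    using Dnorm_coeffs_add_le[OF _ finite_supp_sum assms(3), of "bs a" A bs n] by force
qed

section \<open>Linear independence of the f_{r,P,Q}\<close>

lemma sum_powers_eq_zero_imp_coeff_zero:
  fixes c :: "'a \<Rightarrow> complex"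
  assumes A: "finite A" and inj: "inj_on f A" and U: "infinite U"
    and zero: "\<And>u. u \<in> U \<Longrightarrow> (\<Sum>x\<in>A. c x * u ^ f x) = 0" and x0: "x0 \<in> A"
  shows "c x0 = 0"
proof (rule ccontr)
  assume "c x0 \<noteq> 0"
  define N where "N = Max (f ` A)"
  define C where "C i = (if i \<in> f ` A then c (the_inv_into A f i) else 0)" for i
  have sub: "f ` A \<subseteq> {..N}" using A by (auto simp: N_def)
  have poly: "(\<Sum>i\<le>N. C i * u ^ i) = (\<Sum>x\<in>A. c x * u ^ f x)" for u
  proof -
    have "(\<Sum>i\<le>N. C i * u ^ i) = (\<Sum>i\<in>f ` A. C i * u ^ i)"
      by (rule sum.mono_neutral_right) (use sub C_def in auto)
    also have "\<dots> = (\<Sum>x\<in>A. c x * u ^ f x)"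
      by (simp add: sum.reindex[OF inj] C_def the_inv_into_f_f[OF inj])
    finally show ?thesis .
  qed
  have "C (f x0) \<noteq> 0" "f x0 \<le> N"
    using \<open>c x0 \<noteq> 0\<close> x0 sub by (auto simp: C_def the_inv_into_f_f[OF inj])
  then have "finite {u. (\<Sum>i\<le>N. C i * u ^ i) = 0}" by (rule polyfun_roots_finite)
  moreover have "U \<subseteq> {u. (\<Sum>i\<le>N. C i * u ^ i) = 0}" using zero poly by auto
  ultimately show False using U finite_subset by blast
qed

lemma infinite_unit_circle: "infinite (sphere (0::complex) 1)"
proof
  assume "finite (sphere (0::complex) 1)"
  moreover have "connected (sphere (0::complex) 1)" by (rule connected_sphere) simp
  ultimately obtain a where "sphere (0::complex) 1 = {a}"
    using connected_finite_iff_sing by (metis empty_iff mem_sphere_0 norm_one)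
  moreover have "1 \<in> sphere (0::complex) 1" "-1 \<in> sphere (0::complex) 1" by auto
  ultimately show False by auto
qed

lemma sum_unit_circle_shift:
  fixes u :: complex
  assumes "cmod u = 1" "\<And>x. x \<in> A \<Longrightarrow> p x + q x = d"
    and "(\<Sum>x\<in>A. c x * (u ^ p x * cnj u ^ q x)) = 0"
  shows "(\<Sum>x\<in>A. c x * u ^ (2 * p x)) = 0"
proof -
  have "u * cnj u = 1" using assms(1) by (simp add: complex_norm_square[symmetric])
  have shift: "u ^ d * (u ^ p x * cnj u ^ q x) = u ^ (2 * p x)" if "x \<in> A" for x
  proof -
    have "d = p x + q x" using assms(2)[OF that] by simp
    then have "u ^ d * (u ^ p x * cnj u ^ q x) = u ^ (p x + p x) * (u * cnj u) ^ q x"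
      by (simp add: power_add power_mult_distrib mult_ac)
    then show ?thesis using \<open>u * cnj u = 1\<close> by (simp add: mult_2)
  qed
  have "(\<Sum>x\<in>A. c x * u ^ (2 * p x)) = u ^ d * (\<Sum>x\<in>A. c x * (u ^ p x * cnj u ^ q x))"
    unfolding sum_distrib_left
    by (rule sum.cong) (use shift in \<open>auto simp: mult.left_commute[of "u ^ d"]\<close>)
  then show ?thesis using assms(3) by simp
qed

lemma lowest_order_part_eq_zero:
  fixes g :: "'a \<Rightarrow> real \<Rightarrow> complex"
  assumes S: "finite S" and cont: "\<And>x. x \<in> S \<Longrightarrow> isCont (g x) 0"
    and d: "\<And>x. x \<in> S \<Longrightarrow> d \<le> k x"
    and zero: "\<forall>\<^sub>F t in at_right 0. (\<Sum>x\<in>S. of_real t ^ k x * g x t) = 0"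
  shows "(\<Sum>x\<in>{x\<in>S. k x = d}. g x 0) = 0"
proof -
  define G where "G t = (\<Sum>x\<in>S. of_real t ^ (k x - d) * g x t)" for t
  have "isCont G 0" unfolding G_def using cont by (intro continuous_intros) auto
  then have "(G \<longlongrightarrow> G 0) (at_right 0)"
    by (simp add: isCont_def tendsto_mono[OF at_within_le_at])
  moreover have "\<forall>\<^sub>F t in at_right 0. G t = 0"
    using zero eventually_at_right_less
  proof eventually_elim
    case (elim t)
    have "(\<Sum>x\<in>S. of_real t ^ k x * g x t) = of_real t ^ d * G t"
      unfolding G_def sum_distrib_left
    proof (rule sum.cong)
      fix x assume "x \<in> S"
      then have "of_real t ^ k x = (of_real t ^ d * of_real t ^ (k x - d) :: complex)"
        using d by (simp flip: power_add)
      then show "of_real t ^ k x * g x t = of_real t ^ d * (of_real t ^ (k x - d) * g x t)"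
        by (simp only: mult.assoc)
    qed simp
    then show ?case using elim by simp
  qed
  then have "(G \<longlongrightarrow> 0) (at_right 0)" by (rule tendsto_eventually)
  ultimately have "G 0 = 0" using tendsto_unique[of "at_right (0::real)"] by simp
  moreover have "G 0 = (\<Sum>x\<in>S. if k x = d then g x 0 else 0)"
    unfolding G_def
  proof (rule sum.cong)
    fix x assume "x \<in> S"
    then show "of_real 0 ^ (k x - d) * g x 0 = (if k x = d then g x 0 else 0)"
      using d[of x] by (cases "k x = d") auto
  qed simp
  ultimately show ?thesis by (simp only: sum.inter_filter[OF S])
qed

definition base_value :: "nat \<Rightarrow> nat \<Rightarrow> (nat \<Rightarrow> nat) \<Rightarrow> nat" where
  "base_value n B P = (\<Sum>i\<in>{1..n}. B ^ i * P i)"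

lemma base_value_Suc: "base_value (Suc n) B P = base_value n B P + P (Suc n) * B ^ Suc n"
  by (simp add: base_value_def sum.cl_ivl_Suc mult.commute)

lemma base_value_less:
  assumes "B \<ge> 1" "\<forall>i\<in>{1..n}. P i < B"
  shows "base_value n B P < B ^ Suc n"
  using assms(2)
proof (induction n)
  case 0
  then show ?case using assms(1) by (simp add: base_value_def)
next
  case (Suc n)
  have "P (Suc n) + 1 \<le> B" using Suc.prems[rule_format, of "Suc n"] by simp
  moreover have "base_value n B P < B ^ Suc n" using Suc by simp
  ultimately have "base_value n B P + P (Suc n) * B ^ Suc n < (P (Suc n) + 1) * B ^ Suc n"
    by simp
  also have "\<dots> \<le> B * B ^ Suc n"
    using \<open>P (Suc n) + 1 \<le> B\<close> by (rule mult_le_mono1)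
  finally show ?case by (simp add: base_value_Suc)
qed

lemma base_value_digits_eq:
  assumes "B \<ge> 1" "\<forall>i\<in>{1..n}. P i < B \<and> Q i < B" "base_value n B P = base_value n B Q"
  shows "\<forall>i\<in>{1..n}. P i = Q i"
  using assms(2,3)
proof (induction n)
  case (Suc n)
  have less: "base_value n B P < B ^ Suc n" "base_value n B Q < B ^ Suc n"
    using Suc.prems(1) base_value_less[OF assms(1)] by auto
  have div_mod: "(x + y * B ^ Suc n) div B ^ Suc n = y" "(x + y * B ^ Suc n) mod B ^ Suc n = x"
    if "x < B ^ Suc n" for x y
    using that assms(1) by (simp_all add: div_mult_self1 div_less mod_less del: power_Suc)
  define c where "c = B ^ Suc n"
  have eq: "base_value n B P + P (Suc n) * c = base_value n B Q + Q (Suc n) * c"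
    using Suc.prems(2) by (simp add: base_value_Suc c_def)
  have "P (Suc n) = Q (Suc n)"
    using arg_cong[OF eq, of "\<lambda>z. z div c"] by (simp only: c_def div_mod less)
  moreover have "base_value n B P = base_value n B Q"
    using arg_cong[OF eq, of "\<lambda>z. z mod c"] by (simp only: c_def div_mod less)
  then have "\<forall>i\<in>{1..n}. P i = Q i" using Suc by simp
  ultimately show ?case by (metis atLeastAtMost_iff le_Suc_eq)
qed simp

lemma base_value_inj_on:
  assumes "B \<ge> 1"
  shows "inj_on (base_value n B) {P \<in> mi' n. \<forall>i\<in>{1..n}. P i < B}"
proof (rule inj_onI)
  fix P Q
  assume "P \<in> {P \<in> mi' n. \<forall>i\<in>{1..n}. P i < B}" "Q \<in> {P \<in> mi' n. \<forall>i\<in>{1..n}. P i < B}"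
    and "base_value n B P = base_value n B Q"
  then show "P = Q"
    using base_value_digits_eq[OF assms, of n P Q] mi'_eqI[of P n Q] by simp
qed

lemma digit_bound_exists:
  fixes S :: "((nat \<Rightarrow> nat) \<times> (nat \<Rightarrow> nat)) set"
  assumes "finite S"
  obtains B where "B \<ge> 1" "\<And>x i. x \<in> S \<Longrightarrow> i \<in> {1..n} \<Longrightarrow> fst x i < B \<and> snd x i < B"
proof
  define B where "B = Suc (\<Sum>x\<in>S. \<Sum>i\<in>{1..n}. fst x i + snd x i)"
  show "B \<ge> 1" by (simp add: B_def)
  fix x i assume "x \<in> S" "i \<in> {1..n}"
  have "fst x i + snd x i \<le> (\<Sum>i\<in>{1..n}. fst x i + snd x i)"
    by (rule member_le_sum) (use \<open>i \<in> {1..n}\<close> in auto)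
  also have "\<dots> \<le> (\<Sum>x\<in>S. \<Sum>i\<in>{1..n}. fst x i + snd x i)"
    by (rule member_le_sum) (use \<open>x \<in> S\<close> assms in auto)
  finally show "fst x i < B \<and> snd x i < B" by (simp add: B_def)
qed

lemma mon_on_curve:
  assumes "\<And>i. i \<in> {1..n} \<Longrightarrow> w i = z ^ (B ^ i)"
  shows "mon n w P = z ^ base_value n B P"
  unfolding mon_def base_value_def power_sum by (rule prod.cong) (simp_all add: assms power_mult)

lemma wsq_on_curve:
  fixes t :: real
  assumes "\<And>i. i \<in> {1..n} \<Longrightarrow> w i = (of_real t * u) ^ (B ^ i)" and "cmod u = 1"
  shows "wsq n w = of_real (\<Sum>i\<in>{1..n}. (t\<^sup>2) ^ (B ^ i))"
  unfolding wsq_eq_of_real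
  by (rule arg_cong[where f = of_real], rule sum.cong)
     (simp_all add: assms norm_mult norm_power power_mult[symmetric] mult.commute power_even_abs)

text \<open>On the curve \<open>w\<^sub>i = (t u)\<^bsup>B\<^sup>i\<^esup>\<close> the basis function \<open>f\<^sub>r\<^sub>,\<^sub>P\<^sub>Q\<close> is
  \<open>t\<^bsup>\<kappa>P + \<kappa>Q\<^esup> u\<^bsup>\<kappa>P\<^esup> (cnj u)\<^bsup>\<kappa>Q\<^esup>\<close> with \<open>\<kappa> = base_value n B\<close> times a function of \<open>t\<close> that is continuous with value \<open>1\<close> at \<open>t = 0\<close>.\<close>

lemma represents_zero_lowest_order:
  assumes rep: "represents n b (\<lambda>w. 0)" and B: "B \<ge> 1" and u: "cmod u = 1"
    and d: "\<And>x. x \<in> supp b \<Longrightarrow> d \<le> base_value n B (fst x) + base_value n B (snd x)"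
  shows "(\<Sum>x\<in>{x\<in>supp b. base_value n B (fst x) + base_value n B (snd x) = d}.
            b x * (u ^ base_value n B (fst x) * cnj u ^ base_value n B (snd x))) = 0"
proof -
  let ?\<kappa> = "base_value n B"
  define \<sigma> where "\<sigma> t = (\<Sum>i\<in>{1..n}. (t\<^sup>2) ^ (B ^ i))" for t :: real
  define m where "m x = max (absmi n (fst x)) (absmi n (snd x))" for x :: "(nat \<Rightarrow> nat) \<times> (nat \<Rightarrow> nat)"
  define g where "g x t = b x * (u ^ ?\<kappa> (fst x) * cnj u ^ ?\<kappa> (snd x)) / (1 - of_real (\<sigma> t)) ^ m x"
    for x t
  have fin: "finite (supp b)" using rep by (simp add: represents_def is_Dcoeffs_def)
  have \<sigma>0: "\<sigma> 0 = 0" using B by (simp add: \<sigma>_def zero_power)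
  have "isCont \<sigma> 0" unfolding \<sigma>_def by (intro continuous_intros)
  then have cont: "isCont (g x) 0" for x
    unfolding g_def using \<sigma>0 by (intro continuous_intros) auto
  have "(\<sigma> \<longlongrightarrow> \<sigma> 0) (at_right 0)"
    using \<open>isCont \<sigma> 0\<close> by (simp add: isCont_def tendsto_mono[OF at_within_le_at])
  then have "\<forall>\<^sub>F t in at_right 0. \<sigma> t < 1" using \<sigma>0 by (simp add: order_tendstoD(2))
  then have "\<forall>\<^sub>F t in at_right 0.
      (\<Sum>x\<in>supp b. of_real t ^ (?\<kappa> (fst x) + ?\<kappa> (snd x)) * g x t) = 0"
  proof eventually_elim
    case (elim t)
    define w where "w i = (if i \<in> {1..n} then (of_real t * u) ^ (B ^ i) else 0)" for i
    have wsq: "wsq n w = of_real (\<sigma> t)"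
      unfolding \<sigma>_def by (rule wsq_on_curve[OF _ u]) (simp add: w_def)
    have "(\<Sum>i\<in>{1..n}. (cmod (w i))\<^sup>2) = \<sigma> t"
      using wsq unfolding wsq_eq_of_real by (simp only: of_real_eq_iff)
    then have "w \<in> ball_n n"
      using elim unfolding ball_n_def by (simp add: w_def)
    have mon: "mon n w P = (of_real t * u) ^ ?\<kappa> P" for P
      by (rule mon_on_curve) (simp add: w_def)
    have "of_real t ^ (?\<kappa> (fst x) + ?\<kappa> (snd x)) * g x t = b x * frPQ n (fst x) (snd x) w" for x
      unfolding frPQ_def g_def m_def wsq mon by (simp add: power_mult_distrib power_add)
    then show ?case
      using rep \<open>w \<in> ball_n n\<close> by (simp add: represents_def Dfun_def case_prod_beta)
  qed
  from lowest_order_part_eq_zero[OF fin cont d this]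
  show ?thesis by (simp add: g_def \<sigma>0 m_def)
qed

lemma represents_zero_imp_zero:
  assumes rep: "represents n b (\<lambda>w. 0)"
  shows "b = (\<lambda>x. 0)"
proof (rule ccontr)
  assume "b \<noteq> (\<lambda>x. 0)"
  define S where "S = supp b"
  have "S \<noteq> {}" using \<open>b \<noteq> (\<lambda>x. 0)\<close> by (auto simp: S_def supp_def)
  have S: "finite S" "S \<subseteq> mi' n \<times> mi' n"
    using rep by (auto simp: represents_def is_Dcoeffs_def S_def)
  obtain B where B: "B \<ge> 1" "\<And>x i. x \<in> S \<Longrightarrow> i \<in> {1..n} \<Longrightarrow> fst x i < B \<and> snd x i < B"
    using digit_bound_exists[OF S(1)] by blast
  define \<kappa> where "\<kappa> = base_value n B"
  define k where "k x = \<kappa> (fst x) + \<kappa> (snd x)" for x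
  define d where "d = Min (k ` S)"
  define Sd where "Sd = {x\<in>S. k x = d}"
  have "d \<in> k ` S" unfolding d_def using S \<open>S \<noteq> {}\<close> by (intro Min_in) auto
  then obtain x0 where "x0 \<in> Sd" by (auto simp: Sd_def)
  have "(\<Sum>x\<in>Sd. b x * u ^ (2 * \<kappa> (fst x))) = 0" if "cmod u = 1" for u
    using represents_zero_lowest_order[OF rep B(1) that, of d] S
    by (intro sum_unit_circle_shift[OF that, of _ _ "\<kappa> \<circ> snd" d])
       (auto simp: Sd_def k_def \<kappa>_def S_def d_def)
  moreover have "inj_on (\<lambda>x. 2 * \<kappa> (fst x)) Sd"
  proof (rule inj_onI)
    fix x y assume "x \<in> Sd" "y \<in> Sd" "2 * \<kappa> (fst x) = 2 * \<kappa> (fst y)"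
    then have "x \<in> S" "y \<in> S" "\<kappa> (fst x) = \<kappa> (fst y)" "\<kappa> (snd x) = \<kappa> (snd y)"
      by (auto simp: Sd_def k_def)
    moreover have "fst z \<in> {P \<in> mi' n. \<forall>i\<in>{1..n}. P i < B}" "snd z \<in> {P \<in> mi' n. \<forall>i\<in>{1..n}. P i < B}"
      if "z \<in> S" for z
      using that S(2) B(2) by fastforce+
    ultimately have "fst x = fst y" "snd x = snd y"
      using inj_onD[OF base_value_inj_on[OF B(1)]] unfolding \<kappa>_def by blast+
    then show "x = y" by (simp add: prod_eq_iff)
  qed
  ultimately have "b x0 = 0"
    using sum_powers_eq_zero_imp_coeff_zero[OF _ _ infinite_unit_circle _ \<open>x0 \<in> Sd\<close>] S
    by (auto simp: Sd_def)
  then show False using \<open>x0 \<in> Sd\<close> by (simp add: Sd_def S_def supp_def)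
qed

lemma represents_unique:
  assumes "represents n b1 F" "represents n b2 F"
  shows "b1 = b2"
proof -
  have "represents n (\<lambda>x. b1 x + (-1) * b2 x) (\<lambda>w. F w + (-1) * F w)"
    by (rule represents_add[OF assms(1) represents_scale[OF assms(2)]])
  then have "(\<lambda>x. b1 x + (-1) * b2 x) = (\<lambda>x. 0)"
    by (intro represents_zero_imp_zero) simp
  then show ?thesis by (simp add: fun_eq_iff)
qed

lemma Dnorm_eq_Dnorm_coeffs:
  assumes "represents n b F"
  shows "Dnorm n \<rho> F = Dnorm_coeffs n \<rho> b"
proof -
  have "(THE b. is_Dcoeffs n b \<and> (\<forall>w\<in>ball_n n. F w = Dfun n b w)) = b"
    using assms represents_unique by (intro the_equality) (auto simp: represents_def)
  then show ?thesis by (simp add: Dnorm_def)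
qed

section \<open>Expansion of f_{P,Q} in the basis f_{r,P,Q}\<close>

lemma fPQ_decompose:
  assumes w: "w \<in> ball_n n" and "P 0 \<ge> 1" and "Q 0 \<ge> 1"
  defines "P\<^sub>0 \<equiv> P(0 := P 0 - 1)" and "Q\<^sub>0 \<equiv> Q(0 := Q 0 - 1)"
  shows "fPQ n P Q w = fPQ n P\<^sub>0 Q\<^sub>0 w +
     (\<Sum>i\<in>{1..n}. fPQ n (P\<^sub>0(i := Suc (P\<^sub>0 i))) (Q\<^sub>0(i := Suc (Q\<^sub>0 i))) w)"
proof -
  define M where "M = mon n w (prime_mi P) * cnj (mon n w (prime_mi Q))"
  define N where "N = absmi n P"
  define D where "D = 1 - wsq n w"
  have "D \<noteq> 0" using wsq_ne_1[OF w] by (simp add: D_def)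
  have "N \<ge> 1" using \<open>P 0 \<ge> 1\<close> by (simp add: N_def absmi_split)
  have prime: "prime_mi P\<^sub>0 = prime_mi P" "prime_mi Q\<^sub>0 = prime_mi Q"
    by (simp_all add: P\<^sub>0_def Q\<^sub>0_def prime_mi_def)
  have absP\<^sub>0: "absmi n P\<^sub>0 = N - 1"
    using \<open>P 0 \<ge> 1\<close> by (simp add: P\<^sub>0_def N_def absmi_upd0 absmi_split)
  have f\<^sub>0: "fPQ n P\<^sub>0 Q\<^sub>0 w = M / D ^ (N - 1)"
    by (simp add: fPQ_def prime absP\<^sub>0 M_def D_def)
  have "fPQ n (P\<^sub>0(i := Suc (P\<^sub>0 i))) (Q\<^sub>0(i := Suc (Q\<^sub>0 i))) w = M * (w i * cnj (w i)) / D ^ N"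
    if i: "i \<in> {1..n}" for i
  proof -
    have "prime_mi (P\<^sub>0(i := Suc (P\<^sub>0 i))) = (prime_mi P)(i := Suc (prime_mi P i))"
         "prime_mi (Q\<^sub>0(i := Suc (Q\<^sub>0 i))) = (prime_mi Q)(i := Suc (prime_mi Q i))"
      using i by (auto simp: P\<^sub>0_def Q\<^sub>0_def prime_mi_def)
    moreover have "absmi n (P\<^sub>0(i := Suc (P\<^sub>0 i))) = N"
      using absmi_incr[OF i, of P\<^sub>0] absP\<^sub>0 \<open>N \<ge> 1\<close> by simp
    ultimately show ?thesis
      by (simp add: fPQ_def mon_incr[OF i] M_def D_def mult_ac)
  qed
  then have "(\<Sum>i\<in>{1..n}. fPQ n (P\<^sub>0(i := Suc (P\<^sub>0 i))) (Q\<^sub>0(i := Suc (Q\<^sub>0 i))) w) = M * wsq n w / D ^ N"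
    by (simp add: wsq_def sum_distrib_left sum_divide_distrib)
  moreover have "fPQ n P Q w = M / D ^ N" by (simp add: fPQ_def M_def D_def N_def)
  moreover have "M / D ^ N = M / D ^ (N - 1) + M * wsq n w / D ^ N"
  proof -
    have "D ^ N = D * D ^ (N - 1)" using \<open>N \<ge> 1\<close> by (simp flip: power_Suc)
    moreover have "M = D * M + M * wsq n w" by (simp add: D_def algebra_simps)
    ultimately show ?thesis using \<open>D \<noteq> 0\<close> by (simp add: field_simps)
  qed
  ultimately show ?thesis using f\<^sub>0 by simp
qed

lemma fPQ_eq_frPQ:
  assumes "absmi n P = absmi n Q" "min (P 0) (Q 0) = 0"
  shows "fPQ n P Q = frPQ n (prime_mi P) (prime_mi Q)"
proof -
  have "absmi n P = max (absmi n (prime_mi P)) (absmi n (prime_mi Q))"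
    using assms by (auto simp: absmi_prime_mi)
  then show ?thesis by (simp add: fun_eq_iff fPQ_def frPQ_def)
qed

definition unit_coeffs :: "(nat \<Rightarrow> nat) \<Rightarrow> (nat \<Rightarrow> nat) \<Rightarrow> coeffs" where
  "unit_coeffs P Q = (\<lambda>x. if x = (P, Q) then 1 else 0)"

lemma supp_unit_coeffs: "supp (unit_coeffs P Q) = {(P, Q)}"
  by (auto simp: supp_def unit_coeffs_def)

lemma represents_unit_coeffs:
  "P \<in> mi' n \<Longrightarrow> Q \<in> mi' n \<Longrightarrow> represents n (unit_coeffs P Q) (frPQ n P Q)"
  by (simp add: represents_def is_Dcoeffs_def Dfun_def supp_unit_coeffs) (simp add: unit_coeffs_def)

lemma Dnorm_coeffs_unit_coeffs: "Dnorm_coeffs n \<rho> (unit_coeffs P Q) = \<rho> ^ (absmi n P + absmi n Q)"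
  by (simp add: Dnorm_coeffs_def supp_unit_coeffs) (simp add: unit_coeffs_def)

lemma lowered_mi:
  assumes "P \<in> mi n" "P 0 \<ge> 1"
  defines "P\<^sub>0 \<equiv> P(0 := P 0 - 1)"
  shows "P\<^sub>0 \<in> mi n" "absmi n P\<^sub>0 = absmi n P - 1" "P\<^sub>0 0 = P 0 - 1"
    and "\<And>i. i \<in> {1..n} \<Longrightarrow> P\<^sub>0(i := Suc (P\<^sub>0 i)) \<in> mi n"
    and "\<And>i. i \<in> {1..n} \<Longrightarrow> absmi n (P\<^sub>0(i := Suc (P\<^sub>0 i))) = absmi n P"
    and "\<And>i. i \<in> {1..n} \<Longrightarrow> (P\<^sub>0(i := Suc (P\<^sub>0 i))) 0 = P 0 - 1"
proof -
  show "P\<^sub>0 \<in> mi n" "P\<^sub>0 0 = P 0 - 1" using assms by (auto simp: mi_def P\<^sub>0_def)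
  show abs: "absmi n P\<^sub>0 = absmi n P - 1"
    using assms(2) by (simp add: P\<^sub>0_def absmi_upd0 absmi_split)
  fix i assume "i \<in> {1..n}"
  then show "P\<^sub>0(i := Suc (P\<^sub>0 i)) \<in> mi n" "(P\<^sub>0(i := Suc (P\<^sub>0 i))) 0 = P 0 - 1"
    using \<open>P\<^sub>0 \<in> mi n\<close> by (auto simp: mi_def P\<^sub>0_def)
  have "absmi n P \<ge> 1" using assms(2) by (simp add: absmi_split)
  then show "absmi n (P\<^sub>0(i := Suc (P\<^sub>0 i))) = absmi n P"
    using abs by (simp add: absmi_incr[OF \<open>i \<in> {1..n}\<close>])
qed

lemma fPQ_expansion_base:
  assumes "P \<in> mi n" "Q \<in> mi n" "absmi n P = absmi n Q" "min (P 0) (Q 0) = 0" "\<rho> \<ge> 0"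
  shows "represents n (unit_coeffs (prime_mi P) (prime_mi Q)) (fPQ n P Q)"
    and "Dnorm_coeffs n \<rho> (unit_coeffs (prime_mi P) (prime_mi Q)) \<le> max 1 \<rho> ^ (absmi n P + absmi n Q)"
proof -
  show "represents n (unit_coeffs (prime_mi P) (prime_mi Q)) (fPQ n P Q)"
    using assms by (simp add: fPQ_eq_frPQ represents_unit_coeffs prime_mi_in_mi')
  have "\<rho> ^ (absmi n (prime_mi P) + absmi n (prime_mi Q))
      \<le> max 1 \<rho> ^ (absmi n (prime_mi P) + absmi n (prime_mi Q))"
    using assms(5) by (intro power_mono) auto
  also have "\<dots> \<le> max 1 \<rho> ^ (absmi n P + absmi n Q)"
    by (intro power_increasing) (auto simp: absmi_prime_mi)
  finally show "Dnorm_coeffs n \<rho> (unit_coeffs (prime_mi P) (prime_mi Q)) \<le> max 1 \<rho> ^ (absmi n P + absmi n Q)"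
    by (simp add: Dnorm_coeffs_unit_coeffs)
qed

lemma represents_fPQ_decompose:
  assumes "P 0 \<ge> 1" "Q 0 \<ge> 1" "\<rho> \<ge> 0"
  defines "P\<^sub>0 \<equiv> P(0 := P 0 - 1)" and "Q\<^sub>0 \<equiv> Q(0 := Q 0 - 1)"
  assumes b\<^sub>0: "represents n b\<^sub>0 (fPQ n P\<^sub>0 Q\<^sub>0)" "Dnorm_coeffs n \<rho> b\<^sub>0 \<le> \<beta>"
    and bs: "\<And>i. i \<in> {1..n} \<Longrightarrow> represents n (bs i) (fPQ n (P\<^sub>0(i := Suc (P\<^sub>0 i))) (Q\<^sub>0(i := Suc (Q\<^sub>0 i))))"
      "\<And>i. i \<in> {1..n} \<Longrightarrow> Dnorm_coeffs n \<rho> (bs i) \<le> \<beta>"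
  shows "represents n (\<lambda>x. b\<^sub>0 x + (\<Sum>i\<in>{1..n}. bs i x)) (fPQ n P Q)"
    and "Dnorm_coeffs n \<rho> (\<lambda>x. b\<^sub>0 x + (\<Sum>i\<in>{1..n}. bs i x)) \<le> (real n + 1) * \<beta>"
proof -
  have "represents n (\<lambda>x. b\<^sub>0 x + (\<Sum>i\<in>{1..n}. bs i x)) (\<lambda>w. fPQ n P\<^sub>0 Q\<^sub>0 w
      + (\<Sum>i\<in>{1..n}. fPQ n (P\<^sub>0(i := Suc (P\<^sub>0 i))) (Q\<^sub>0(i := Suc (Q\<^sub>0 i))) w))"
    using bs(1) by (intro represents_add[OF b\<^sub>0(1)] represents_sum) auto
  then show "represents n (\<lambda>x. b\<^sub>0 x + (\<Sum>i\<in>{1..n}. bs i x)) (fPQ n P Q)"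
    by (rule represents_cong)
       (simp add: fPQ_decompose[where P = P and Q = Q, OF _ assms(1,2)] P\<^sub>0_def Q\<^sub>0_def)
  have fin: "finite (supp b\<^sub>0)" "\<And>i. i \<in> {1..n} \<Longrightarrow> finite (supp (bs i))"
    using b\<^sub>0(1) bs(1) by (auto simp: represents_def is_Dcoeffs_def)
  have "Dnorm_coeffs n \<rho> (\<lambda>x. b\<^sub>0 x + (\<Sum>i\<in>{1..n}. bs i x))
      \<le> Dnorm_coeffs n \<rho> b\<^sub>0 + Dnorm_coeffs n \<rho> (\<lambda>x. \<Sum>i\<in>{1..n}. bs i x)"
    by (rule Dnorm_coeffs_add_le[OF fin(1) finite_supp_sum[OF _ fin(2)] assms(3)]) simp
  also have "\<dots> \<le> \<beta> + (\<Sum>i\<in>{1..n}. Dnorm_coeffs n \<rho> (bs i))"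
    by (rule add_mono[OF b\<^sub>0(2) Dnorm_coeffs_sum_le[OF _ fin(2) assms(3)]]) simp
  also have "\<dots> \<le> \<beta> + (\<Sum>i\<in>{1..n}. \<beta>)"
    using bs(2) by (intro add_left_mono sum_mono) blast
  also have "\<dots> = (real n + 1) * \<beta>"
    by (simp add: algebra_simps)
  finally show "Dnorm_coeffs n \<rho> (\<lambda>x. b\<^sub>0 x + (\<Sum>i\<in>{1..n}. bs i x)) \<le> (real n + 1) * \<beta>" .
qed

lemma fPQ_expansion:
  assumes "P \<in> mi n" "Q \<in> mi n" "absmi n P = absmi n Q" "min (P 0) (Q 0) \<le> j" "\<rho> \<ge> 0"
  shows "\<exists>b. represents n b (fPQ n P Q)
    \<and> Dnorm_coeffs n \<rho> b \<le> (real n + 1) ^ j * max 1 \<rho> ^ (absmi n P + absmi n Q)"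
  using assms(1-4)
proof (induction j arbitrary: P Q)
  case 0
  then have "min (P 0) (Q 0) = 0" by simp
  with 0 show ?case using fPQ_expansion_base[OF 0(1-3) _ assms(5)] by auto
next
  case (Suc j)
  let ?R = "max 1 \<rho>"
  show ?case
  proof (cases "min (P 0) (Q 0) = 0")
    case True
    have "?R ^ (absmi n P + absmi n Q) \<le> (real n + 1) ^ Suc j * ?R ^ (absmi n P + absmi n Q)"
      by (simp add: mult_le_cancel_right1 del: power_Suc)
    then show ?thesis
      using fPQ_expansion_base[OF Suc.prems(1-3) True assms(5)] by (meson order_trans)
  next
    case False
    then have "P 0 \<ge> 1" "Q 0 \<ge> 1" by auto
    define P\<^sub>0 where "P\<^sub>0 = P(0 := P 0 - 1)"
    define Q\<^sub>0 where "Q\<^sub>0 = Q(0 := Q 0 - 1)"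
    define \<beta> where "\<beta> = (real n + 1) ^ j * ?R ^ (absmi n P + absmi n Q)"
    note P = lowered_mi[OF Suc.prems(1) \<open>P 0 \<ge> 1\<close>, folded P\<^sub>0_def]
    note Q = lowered_mi[OF Suc.prems(2) \<open>Q 0 \<ge> 1\<close>, folded Q\<^sub>0_def]
    obtain b\<^sub>0 where b\<^sub>0: "represents n b\<^sub>0 (fPQ n P\<^sub>0 Q\<^sub>0)"
        "Dnorm_coeffs n \<rho> b\<^sub>0 \<le> (real n + 1) ^ j * ?R ^ (absmi n P\<^sub>0 + absmi n Q\<^sub>0)"
      using Suc.IH[OF P(1) Q(1)] Suc.prems(3,4) P(2,3) Q(2,3) by fastforce
    have "Dnorm_coeffs n \<rho> b\<^sub>0 \<le> \<beta>"
      unfolding \<beta>_def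
      by (rule order_trans[OF b\<^sub>0(2)]) (auto simp: P(2) Q(2) intro!: mult_left_mono power_increasing)
    have "\<exists>b. represents n b (fPQ n (P\<^sub>0(i := Suc (P\<^sub>0 i))) (Q\<^sub>0(i := Suc (Q\<^sub>0 i))))
        \<and> Dnorm_coeffs n \<rho> b \<le> \<beta>" if "i \<in> {1..n}" for i
    proof -
      have "absmi n (P\<^sub>0(i := Suc (P\<^sub>0 i))) = absmi n (Q\<^sub>0(i := Suc (Q\<^sub>0 i)))"
        "min ((P\<^sub>0(i := Suc (P\<^sub>0 i))) 0) ((Q\<^sub>0(i := Suc (Q\<^sub>0 i))) 0) \<le> j"
        using Suc.prems(3,4) P(5,6)[OF that] Q(5,6)[OF that] by simp_all
      from Suc.IH[OF P(4)[OF that] Q(4)[OF that] this] show ?thesis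
        unfolding P(5)[OF that] Q(5)[OF that] \<beta>_def .
    qed
    then obtain bs where bs: "\<And>i. i \<in> {1..n} \<Longrightarrow>
        represents n (bs i) (fPQ n (P\<^sub>0(i := Suc (P\<^sub>0 i))) (Q\<^sub>0(i := Suc (Q\<^sub>0 i))))"
        "\<And>i. i \<in> {1..n} \<Longrightarrow> Dnorm_coeffs n \<rho> (bs i) \<le> \<beta>"
      by metis
    have "represents n (\<lambda>x. b\<^sub>0 x + (\<Sum>i\<in>{1..n}. bs i x)) (fPQ n P Q)"
      "Dnorm_coeffs n \<rho> (\<lambda>x. b\<^sub>0 x + (\<Sum>i\<in>{1..n}. bs i x)) \<le> (real n + 1) * \<beta>"
      using represents_fPQ_decompose[where P = P and Q = Q and bs = bs and \<beta> = \<beta>,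
          OF \<open>P 0 \<ge> 1\<close> \<open>Q 0 \<ge> 1\<close> assms(5)] b\<^sub>0(1) \<open>Dnorm_coeffs n \<rho> b\<^sub>0 \<le> \<beta>\<close> bs
      unfolding P\<^sub>0_def Q\<^sub>0_def by blast+
    then show ?thesis by (auto simp: \<beta>_def)
  qed
qed

section \<open>The factor (2h)^N (1/(2h))_N\<close>

definition scaled_pochhammer :: "complex \<Rightarrow> nat \<Rightarrow> complex" where
  "scaled_pochhammer h N = (2 * h) ^ N * pochhammer (1 / (2 * h)) N"

lemma scaled_pochhammer_eq_prod:
  assumes "h \<noteq> 0"
  shows "scaled_pochhammer h N = (\<Prod>j<N. 1 + 2 * h * of_nat j)"
proof -
  have "scaled_pochhammer h N = (\<Prod>j<N. 2 * h * (1 / (2 * h) + of_nat j))"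
    by (simp add: scaled_pochhammer_def pochhammer_prod prod.distrib atLeast0LessThan)
  also have "\<dots> = (\<Prod>j<N. 1 + 2 * h * of_nat j)"
    using assms by (simp add: distrib_left)
  finally show ?thesis .
qed

lemma fact_eq_prod_lessThan: "fact N = (\<Prod>j<N. real j + 1)"
  by (induction N) (simp_all add: algebra_simps)

lemma norm_scaled_pochhammer_le:
  assumes "h \<noteq> 0" "cmod h \<le> M"
  shows "cmod (scaled_pochhammer h N) \<le> (1 + 2 * M) ^ N * fact N"
proof -
  have "cmod (1 + 2 * h * of_nat j) \<le> (1 + 2 * M) * (real j + 1)" for j
  proof -
    have "cmod (1 + 2 * h * of_nat j) \<le> 1 + 2 * cmod h * real j"
      using norm_triangle_ineq[of 1 "2 * h * of_nat j"] by (simp add: norm_mult)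
    also have "\<dots> \<le> 1 + 2 * M * real j"
      using assms(2) by (simp add: mult_right_mono)
    also have "\<dots> \<le> (1 + 2 * M) * (real j + 1)"
      using order_trans[OF norm_ge_zero assms(2)] by (simp add: algebra_simps)
    finally show ?thesis .
  qed
  then have "(\<Prod>j<N. cmod (1 + 2 * h * of_nat j)) \<le> (\<Prod>j<N. (1 + 2 * M) * (real j + 1))"
    by (intro prod_mono) auto
  then show ?thesis
    by (simp add: scaled_pochhammer_eq_prod[OF assms(1)] prod_norm prod.distrib fact_eq_prod_lessThan)
qed

lemma norm_scaled_pochhammer_ge:
  assumes "h \<noteq> 0" "e \<ge> 0" "\<And>j. e * (real j + 1) \<le> cmod (1 + 2 * h * of_nat j)"
  shows "e ^ N * fact N \<le> cmod (scaled_pochhammer h N)"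
proof -
  have "(\<Prod>j<N. e * (real j + 1)) \<le> (\<Prod>j<N. cmod (1 + 2 * h * of_nat j))"
    using assms(2,3) by (intro prod_mono) auto
  then show ?thesis
    by (simp add: scaled_pochhammer_eq_prod[OF assms(1)] prod_norm prod.distrib fact_eq_prod_lessThan)
qed

lemma Hset_compact_pole_distance:
  assumes "compact K" "K \<subseteq> Hset"
  obtains e where "e > 0" "\<And>h j. h \<in> K \<Longrightarrow> e * (real j + 1) \<le> cmod (1 + 2 * h * of_nat j)"
proof -
  define pole where "pole m = - 1 / (2 * of_nat (Suc m) :: complex)" for m
  have "pole = (\<lambda>m. (-1/2) * (1 / of_nat (Suc m)))" by (simp add: fun_eq_iff pole_def)
  then have "pole \<longlonglongrightarrow> 0"
    using tendsto_mult[OF tendsto_const[of "-1/2 :: complex"] LIMSEQ_Suc[OF lim_1_over_n]] by simp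
  then have "closed (insert 0 (range pole))"
    by (intro compact_imp_closed compact_sequence_with_limit)
  moreover have "pole m \<notin> K" for m
    using assms(2) unfolding Hset_def pole_def by (force intro: exI[of _ "Suc m"])
  then have "K \<inter> insert 0 (range pole) = {}"
    using assms(2) by (auto simp: Hset_def)
  ultimately obtain \<delta> where "\<delta> > 0" and \<delta>: "\<And>h m. h \<in> K \<Longrightarrow> \<delta> \<le> dist h (pole m)"
    using separate_compact_closed[OF assms(1)] by (metis rangeI insertCI)
  show thesis
  proof (rule that[of "min 1 \<delta>"])
    show "min 1 \<delta> > 0" using \<open>\<delta> > 0\<close> by simp
    fix h j assume "h \<in> K"
    show "min 1 \<delta> * (real j + 1) \<le> cmod (1 + 2 * h * of_nat j)"
    proof (cases j)
      case (Suc m)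
      have "(2 * of_nat (Suc m) :: complex) \<noteq> 0" by (metis of_nat_eq_0_iff mult_eq_0_iff nat.distinct(1) zero_neq_numeral)
      then have "1 + 2 * h * of_nat j = 2 * of_nat j * (h - pole m)"
        using Suc by (simp add: pole_def field_simps)
      then have "cmod (1 + 2 * h * of_nat j) = 2 * real j * dist h (pole m)"
        by (simp add: norm_mult dist_norm)
      then have "cmod (1 + 2 * h * of_nat j) = dist h (pole m) * (2 * real j)" by simp
      moreover have "min 1 \<delta> * (real j + 1) \<le> \<delta> * (2 * real j)"
        using Suc \<open>\<delta> > 0\<close> by (intro mult_mono) auto
      moreover have "\<delta> * (2 * real j) \<le> dist h (pole m) * (2 * real j)"
        using \<delta>[OF \<open>h \<in> K\<close>] by (intro mult_right_mono) auto
      ultimately show ?thesis by linarith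
    qed simp
  qed
qed

lemma fact_le_sqrt_fact_double: "fact N \<le> sqrt (fact (N + N))"
proof -
  have "fact N * fact N dvd (fact (N + N) :: nat)" by (rule fact_fact_dvd_fact)
  then have "fact N * fact N \<le> (fact (N + N) :: nat)" by (rule dvd_imp_le) simp
  then have "real (fact N * fact N) \<le> real (fact (N + N))" by (simp only: of_nat_le_iff)
  then have "(fact N)\<^sup>2 \<le> (fact (N + N) :: real)" by (simp add: power2_eq_square)
  then show ?thesis by (rule real_le_rsqrt)
qed

lemma sqrt_fact_double_le: "sqrt (fact (N + N)) \<le> 2 ^ N * fact N"
proof -
  have "fact (N + N) = fact N * fact N * ((N + N) choose N)"
    using binomial_fact_lemma[of N "N + N"] by simp
  moreover have "(N + N) choose N \<le> 4 ^ N"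
    using binomial_le_pow2[of "N + N" N] by (simp add: power_add flip: power_mult_distrib)
  ultimately have "fact (N + N) \<le> (fact N * fact N * 4 ^ N :: nat)" by simp
  then have "real (fact (N + N)) \<le> real (fact N * fact N * 4 ^ N)" by (simp only: of_nat_le_iff)
  moreover have "(4::real) ^ N = 2 ^ N * 2 ^ N" by (simp flip: power_mult_distrib)
  then have "real (fact N * fact N * 4 ^ N) = (2 ^ N * fact N)\<^sup>2"
    by (simp add: power2_eq_square)
  ultimately have "fact (N + N) \<le> (2 ^ N * fact N :: real)\<^sup>2" by simp
  then show ?thesis by (intro real_le_lsqrt) simp_all
qed

lemma power_fact_le_sqrt_fact_double:
  assumes "c \<ge> 0"
  shows "c ^ N * fact N \<le> sqrt c ^ (N + N) * sqrt (fact (N + N))"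
proof -
  have "sqrt c ^ (N + N) = c ^ N"
    using assms by (simp only: mult_2[symmetric] power_mult real_sqrt_pow2)
  then show ?thesis
    using assms by (simp add: mult_left_mono fact_le_sqrt_fact_double)
qed

lemma power_sqrt_fact_double_le:
  assumes "e > 0" "\<rho> \<ge> 0"
  shows "\<rho> ^ (N + N) * sqrt (fact (N + N)) \<le> (2 * \<rho>\<^sup>2 / e) ^ N * (e ^ N * fact N)"
proof -
  have "(2 * \<rho>\<^sup>2 / e) ^ N * e ^ N = (2 * \<rho>\<^sup>2 / e * e) ^ N"
    by (rule power_mult_distrib[symmetric])
  also have "\<dots> = 2 ^ N * (\<rho>\<^sup>2) ^ N"
    using assms(1) by (simp add: power_mult_distrib)
  also have "(\<rho>\<^sup>2) ^ N = \<rho> ^ (N + N)"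
    by (simp only: power_mult[symmetric] mult_2)
  finally have eq: "(2 * \<rho>\<^sup>2 / e) ^ N * e ^ N = 2 ^ N * \<rho> ^ (N + N)" .
  have "\<rho> ^ (N + N) * sqrt (fact (N + N)) \<le> \<rho> ^ (N + N) * (2 ^ N * fact N)"
    using assms(2) by (intro mult_left_mono sqrt_fact_double_le) simp
  also have "\<dots> = ((2 * \<rho>\<^sup>2 / e) ^ N * e ^ N) * fact N"
    unfolding eq by (simp only: mult_ac)
  finally show ?thesis by (simp only: mult.assoc)
qed

lemma Dnorm_Psi_le_sum:
  assumes "is_CpolyU1 n a" "\<rho> \<ge> 0"
  shows "Dnorm n \<rho> (Psi n h a) \<le> (\<Sum>x\<in>supp a. cmod (a x) * cmod (scaled_pochhammer h (absmi n (fst x)))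
    * ((real n + 1) ^ absmi n (fst x) * max 1 \<rho> ^ (absmi n (fst x) + absmi n (snd x))))"
proof -
  define S where "S = supp a"
  have S: "finite S" "S \<subseteq> mi n \<times> mi n" "\<And>x. x \<in> S \<Longrightarrow> absmi n (fst x) = absmi n (snd x)"
    using assms(1) by (auto simp: is_CpolyU1_def is_Cpoly_def S_def)
  have "\<exists>b. represents n b (fPQ n (fst x) (snd x)) \<and> Dnorm_coeffs n \<rho> b
      \<le> (real n + 1) ^ absmi n (fst x) * max 1 \<rho> ^ (absmi n (fst x) + absmi n (snd x))"
    if "x \<in> S" for x
    using S(2) that assms(2)
    by (intro fPQ_expansion S(3)) (auto simp: absmi_split intro: min.coboundedI1)
  then obtain bs where bs: "\<And>x. x \<in> S \<Longrightarrow> represents n (bs x) (fPQ n (fst x) (snd x))"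
    "\<And>x. x \<in> S \<Longrightarrow> Dnorm_coeffs n \<rho> (bs x)
      \<le> (real n + 1) ^ absmi n (fst x) * max 1 \<rho> ^ (absmi n (fst x) + absmi n (snd x))"
    by metis
  define coef where "coef x = a x * scaled_pochhammer h (absmi n (fst x))" for x
  have "represents n (\<lambda>y. \<Sum>x\<in>S. coef x * bs x y) (\<lambda>w. \<Sum>x\<in>S. coef x * fPQ n (fst x) (snd x) w)"
    using S(1) bs(1) by (intro represents_sum represents_scale)
  moreover have "Psi n h a = (\<lambda>w. \<Sum>x\<in>S. coef x * fPQ n (fst x) (snd x) w)"
    by (simp add: Psi_def S_def coef_def scaled_pochhammer_def case_prod_beta mult.assoc)
  ultimately have "Dnorm n \<rho> (Psi n h a) = Dnorm_coeffs n \<rho> (\<lambda>y. \<Sum>x\<in>S. coef x * bs x y)"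
    by (simp add: Dnorm_eq_Dnorm_coeffs)
  also have "\<dots> \<le> (\<Sum>x\<in>S. cmod (coef x) * Dnorm_coeffs n \<rho> (bs x))"
    using Dnorm_coeffs_sum_le[OF S(1), of "\<lambda>x y. coef x * bs x y" \<rho> n] bs(1) assms(2)
    by (auto simp: Dnorm_coeffs_scale represents_def is_Dcoeffs_def supp_def)
  also have "\<dots> \<le> (\<Sum>x\<in>S. cmod (a x) * cmod (scaled_pochhammer h (absmi n (fst x)))
      * ((real n + 1) ^ absmi n (fst x) * max 1 \<rho> ^ (absmi n (fst x) + absmi n (snd x))))"
    using bs(2) by (intro sum_mono) (simp add: coef_def norm_mult mult_left_mono)
  finally show ?thesis by (simp add: S_def)
qed

lemma Dnorm_Psi_le:
  assumes "compact K" "K \<subseteq> Hset" "\<rho> > 0"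
  shows "\<exists>\<rho>'>0. \<forall>h\<in>K. \<forall>a. is_CpolyU1 n a \<longrightarrow> Dnorm n \<rho> (Psi n h a) \<le> Cnorm n \<rho>' a"
proof -
  obtain M where M: "\<And>h. h \<in> K \<Longrightarrow> cmod h \<le> M" and "M \<ge> 0"
    using compact_imp_bounded[OF assms(1)] unfolding bounded_iff
    by (metis dual_order.trans linear norm_ge_zero)
  define R where "R = max 1 \<rho>"
  define c where "c = (1 + 2 * M) * (real n + 1)"
  define \<rho>' where "\<rho>' = sqrt c * R"
  have "c \<ge> 0" using \<open>M \<ge> 0\<close> by (simp add: c_def)
  have weight_le: "cmod (scaled_pochhammer h N) * ((real n + 1) ^ N * R ^ (N + N))
      \<le> \<rho>' ^ (N + N) * sqrt (fact (N + N))" if "h \<in> K" for h N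
  proof -
    have "h \<noteq> 0" using that assms(2) by (auto simp: Hset_def)
    have "cmod (scaled_pochhammer h N) * ((real n + 1) ^ N * R ^ (N + N))
        \<le> ((1 + 2 * M) ^ N * fact N) * ((real n + 1) ^ N * R ^ (N + N))"
      using norm_scaled_pochhammer_le[OF \<open>h \<noteq> 0\<close> M[OF that]] by (intro mult_right_mono) (simp_all add: R_def)
    also have "\<dots> = (c ^ N * fact N) * R ^ (N + N)"
      by (simp add: c_def power_mult_distrib mult_ac)
    also have "\<dots> \<le> (sqrt c ^ (N + N) * sqrt (fact (N + N))) * R ^ (N + N)"
      using power_fact_le_sqrt_fact_double[OF \<open>c \<ge> 0\<close>] by (intro mult_right_mono) (simp_all add: R_def)
    also have "\<dots> = \<rho>' ^ (N + N) * sqrt (fact (N + N))"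
      by (simp add: \<rho>'_def power_mult_distrib mult_ac)
    finally show ?thesis .
  qed
  have "Dnorm n \<rho> (Psi n h a) \<le> Cnorm n \<rho>' a" if "h \<in> K" "is_CpolyU1 n a" for h a
  proof -
    have "absmi n (fst x) = absmi n (snd x)" if "x \<in> supp a" for x
      using \<open>is_CpolyU1 n a\<close> that by (auto simp: is_CpolyU1_def)
    then have "(\<Sum>x\<in>supp a. cmod (a x) * cmod (scaled_pochhammer h (absmi n (fst x)))
        * ((real n + 1) ^ absmi n (fst x) * R ^ (absmi n (fst x) + absmi n (snd x))))
      \<le> Cnorm n \<rho>' a"
      unfolding Cnorm_def case_prod_beta prod.collapse mult.assoc
      by (intro sum_mono mult_left_mono) (simp_all add: weight_le[OF that(1)])
    then show ?thesis
      using Dnorm_Psi_le_sum[OF that(2) less_imp_le[OF assms(3)], of h] by (simp add: R_def)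
  qed
  moreover have "\<rho>' > 0"
    using \<open>M \<ge> 0\<close> by (simp add: \<rho>'_def c_def R_def)
  ultimately show ?thesis by blast
qed

definition tilde_pair :: "nat \<Rightarrow> (nat \<Rightarrow> nat) \<times> (nat \<Rightarrow> nat) \<Rightarrow> (nat \<Rightarrow> nat) \<times> (nat \<Rightarrow> nat)" where
  "tilde_pair n x = (tildeP n (fst x) (snd x), tildeP n (snd x) (fst x))"

lemma tilde_pair_inj_on: "inj_on (tilde_pair n) (mi' n \<times> mi' n)"
  by (rule inj_onI) (metis mem_Times_iff prime_mi_tildeP prod.inject tilde_pair_def prod_eqI)

definition max_absmi :: "nat \<Rightarrow> (nat \<Rightarrow> nat) \<times> (nat \<Rightarrow> nat) \<Rightarrow> nat" where
  "max_absmi n x = max (absmi n (fst x)) (absmi n (snd x))"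

lemma absmi_tilde_pair:
  assumes "x \<in> mi' n \<times> mi' n"
  shows "absmi n (fst (tilde_pair n x)) = max_absmi n x"
    and "absmi n (snd (tilde_pair n x)) = max_absmi n x"
  using assms by (auto simp: tilde_pair_def max_absmi_def absmi_tildeP max.commute)

lemma Phi_eq:
  "Phi n h b z = (\<Sum>y\<in>supp b. if z = tilde_pair n y then b y / scaled_pochhammer h (max_absmi n y) else 0)"
  unfolding Phi_def tilde_pair_def scaled_pochhammer_def max_absmi_def
  by (cases z) (auto simp: case_prod_beta intro!: sum.cong)

lemma Phi_tilde_pair:
  assumes "is_Dcoeffs n b" "x \<in> supp b"
  shows "Phi n h b (tilde_pair n x) = b x / scaled_pochhammer h (max_absmi n x)"
proof -
  have "Phi n h b (tilde_pair n x)
      = (\<Sum>y\<in>supp b. if y = x then b y / scaled_pochhammer h (max_absmi n y) else 0)"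
    unfolding Phi_eq
  proof (rule sum.cong)
    fix y assume "y \<in> supp b"
    then have "tilde_pair n x = tilde_pair n y \<longleftrightarrow> y = x"
      using assms inj_onD[OF tilde_pair_inj_on, of n x y] by (auto simp: is_Dcoeffs_def)
    then show "(if tilde_pair n x = tilde_pair n y then b y / scaled_pochhammer h (max_absmi n y) else 0)
      = (if y = x then b y / scaled_pochhammer h (max_absmi n y) else 0)"
      by simp
  qed simp
  then show ?thesis using assms by (simp add: is_Dcoeffs_def)
qed

lemma supp_Phi: "supp (Phi n h b) \<subseteq> tilde_pair n ` supp b"
proof
  fix z assume z: "z \<in> supp (Phi n h b)"
  show "z \<in> tilde_pair n ` supp b"
  proof (rule ccontr)
    assume "z \<notin> tilde_pair n ` supp b"
    then have "Phi n h b z = 0" unfolding Phi_eq by (intro sum.neutral) auto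
    with z show False by (simp add: supp_def)
  qed
qed

lemma Cnorm_Phi_eq:
  assumes "is_Dcoeffs n b"
  shows "Cnorm n \<rho> (Phi n h b) = (\<Sum>x\<in>supp b. cmod (b x) / cmod (scaled_pochhammer h (max_absmi n x))
    * \<rho> ^ (max_absmi n x + max_absmi n x) * sqrt (fact (max_absmi n x + max_absmi n x)))"
proof -
  have S: "finite (supp b)" "supp b \<subseteq> mi' n \<times> mi' n" using assms by (auto simp: is_Dcoeffs_def)
  have inj: "inj_on (tilde_pair n) (supp b)" using tilde_pair_inj_on S(2) by (rule inj_on_subset)
  have "Cnorm n \<rho> (Phi n h b) = (\<Sum>z\<in>tilde_pair n ` supp b. cmod (Phi n h b z)
      * \<rho> ^ (absmi n (fst z) + absmi n (snd z)) * sqrt (fact (absmi n (fst z) + absmi n (snd z))))"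
    using Cnorm_superset[OF _ supp_Phi] S(1) by (simp add: case_prod_beta)
  also have "\<dots> = (\<Sum>x\<in>supp b. cmod (Phi n h b (tilde_pair n x))
      * \<rho> ^ (absmi n (fst (tilde_pair n x)) + absmi n (snd (tilde_pair n x)))
      * sqrt (fact (absmi n (fst (tilde_pair n x)) + absmi n (snd (tilde_pair n x)))))"
    by (rule sum.reindex[OF inj, unfolded comp_def])
  also have "\<dots> = (\<Sum>x\<in>supp b. cmod (b x) / cmod (scaled_pochhammer h (max_absmi n x))
      * \<rho> ^ (max_absmi n x + max_absmi n x) * sqrt (fact (max_absmi n x + max_absmi n x)))"
  proof (rule sum.cong)
    fix x assume "x \<in> supp b"
    moreover have "x \<in> mi' n \<times> mi' n" using S(2) \<open>x \<in> supp b\<close> by blast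
    ultimately show "cmod (Phi n h b (tilde_pair n x))
        * \<rho> ^ (absmi n (fst (tilde_pair n x)) + absmi n (snd (tilde_pair n x)))
        * sqrt (fact (absmi n (fst (tilde_pair n x)) + absmi n (snd (tilde_pair n x))))
      = cmod (b x) / cmod (scaled_pochhammer h (max_absmi n x))
        * \<rho> ^ (max_absmi n x + max_absmi n x) * sqrt (fact (max_absmi n x + max_absmi n x))"
      by (simp add: Phi_tilde_pair[OF assms] absmi_tilde_pair norm_divide)
  qed simp
  finally show ?thesis .
qed

lemma Cnorm_Phi_le:
  assumes "compact K" "K \<subseteq> Hset" "\<rho> > 0"
  shows "\<exists>\<rho>''>0. \<forall>h\<in>K. \<forall>b. is_Dcoeffs n b \<longrightarrow> Cnorm n \<rho> (Phi n h b) \<le> Dnorm_coeffs n \<rho>'' b"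
proof -
  obtain e where "e > 0" and e: "\<And>h j. h \<in> K \<Longrightarrow> e * (real j + 1) \<le> cmod (1 + 2 * h * of_nat j)"
    using Hset_compact_pole_distance[OF assms(1,2)] by blast
  define \<rho>'' where "\<rho>'' = max 1 (2 * \<rho>\<^sup>2 / e)"
  have weight_le: "\<rho> ^ (N + N) * sqrt (fact (N + N)) / cmod (scaled_pochhammer h N) \<le> \<rho>'' ^ M"
    if "h \<in> K" "N \<le> M" for h N M
  proof -
    have "h \<noteq> 0" using that assms(2) by (auto simp: Hset_def)
    have low: "e ^ N * fact N \<le> cmod (scaled_pochhammer h N)"
      using norm_scaled_pochhammer_ge[OF \<open>h \<noteq> 0\<close>] \<open>e > 0\<close> e[OF that(1)] by simp
    moreover have "0 < e ^ N * fact N" using \<open>e > 0\<close> by simp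
    ultimately have pos: "0 < cmod (scaled_pochhammer h N)" by linarith
    have "\<rho> ^ (N + N) * sqrt (fact (N + N)) \<le> (2 * \<rho>\<^sup>2 / e) ^ N * cmod (scaled_pochhammer h N)"
      using \<open>e > 0\<close> assms(3)
      by (intro order_trans[OF power_sqrt_fact_double_le mult_left_mono[OF low]]) simp_all
    then have "\<rho> ^ (N + N) * sqrt (fact (N + N)) / cmod (scaled_pochhammer h N) \<le> (2 * \<rho>\<^sup>2 / e) ^ N"
      by (simp only: pos_divide_le_eq[OF pos])
    also have "\<dots> \<le> \<rho>'' ^ N"
      using \<open>e > 0\<close> by (intro power_mono) (auto simp: \<rho>''_def)
    also have "\<dots> \<le> \<rho>'' ^ M"
      using \<open>N \<le> M\<close> by (intro power_increasing) (auto simp: \<rho>''_def)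
    finally show ?thesis .
  qed
  have "Cnorm n \<rho> (Phi n h b) \<le> Dnorm_coeffs n \<rho>'' b" if "h \<in> K" "is_Dcoeffs n b" for h b
    unfolding Cnorm_Phi_eq[OF that(2)] Dnorm_coeffs_def case_prod_beta prod.collapse
  proof (rule sum_mono)
    fix x
    have "cmod (b x) * (\<rho> ^ (max_absmi n x + max_absmi n x) * sqrt (fact (max_absmi n x + max_absmi n x))
        / cmod (scaled_pochhammer h (max_absmi n x))) \<le> cmod (b x) * \<rho>'' ^ (absmi n (fst x) + absmi n (snd x))"
      using weight_le[OF that(1)] by (intro mult_left_mono) (auto simp: max_absmi_def)
    then show "cmod (b x) / cmod (scaled_pochhammer h (max_absmi n x)) * \<rho> ^ (max_absmi n x + max_absmi n x)
        * sqrt (fact (max_absmi n x + max_absmi n x)) \<le> cmod (b x) * \<rho>'' ^ (absmi n (fst x) + absmi n (snd x))"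
      by (simp add: mult_ac)
  qed
  moreover have "\<rho>'' > 0" by (simp add: \<rho>''_def)
  ultimately show ?thesis by blast
qed

theorem lemma3p6:
  fixes n :: nat and K :: "complex set" and \<rho> :: real
  assumes "n \<ge> 1" and "compact K" and "K \<subseteq> Hset" and "\<rho> > 0"
  shows "(\<exists>\<rho>'>0. \<forall>h\<in>K. \<forall>a. is_CpolyU1 n a \<longrightarrow> Dnorm n \<rho> (Psi n h a) \<le> Cnorm n \<rho>' a)
       \<and> (\<exists>\<rho>''>0. \<forall>h\<in>K. \<forall>b. is_Dcoeffs n b \<longrightarrow> Cnorm n \<rho> (Phi n h b) \<le> Dnorm_coeffs n \<rho>'' b)"
  using Dnorm_Psi_le[OF assms(2-4)] Cnorm_Phi_le[OF assms(2-4)] by blast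

end
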